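(* Let $\mathfrak n=W\oplus\mathfrak z$ be a finite-dimensional 2-step nilpotent Lie algebra over a field of characteristic zero, with basis $z_1,\dots,z_m$ of the center $\mathfrak z$ and $T_i$ as below. Suppose given: (a) a linear map $\delta_{\mathfrak z}:\mathfrak z\to\Lambda^2\mathfrak z$ satisfying co-Jacobi; write $\delta_{\mathfrak z}(z_i)=\sum_{a<b}c_i^{ab}z_a\wedge z_b$; (b) linear maps $D^1,\dots,D^m:W\to W$ with $[D^a,D^b]=\sum_ic_i^{ab}D^i$ for all $a<b$, and such that for all $x,y\in W$ $$\sum_iT_i(x)(y)\,\delta_{\mathfrak z}(z_i)=\sum_{i,j}\big(T_i(D^jx)(y)+T_i(x)(D^jy)\big)z_i\wedge z_j;$$ (c) a linear map $\varphi:W\to\Lambda^2\mathfrak z$, $\varphi(v)=\sum_{a<b}\varphi_{ab}(v)z_a\wedge z_b$, such that for all $v\in W$ $$\sum_i\varphi(D^iv)\wedge z_i+\sum_{a<b}\varphi_{ab}(v)\big(\delta_{\mathfrak z}(z_a)\wedge z_b-z_a\wedge\delta_{\mathfrak z}(z_b)\big)=0\in\Lambda^3\mathfrak z.$$ Then the linear map $\delta:\mathfrak n\to\Lambda^2\mathfrak n$ given by $\delta(z)=\delta_{\mathfrak z}(z)$ for $z\in\mathfrak z$ and $\delta(v)=\sum_iD^i(v)\wedge z_i+\varphi(v)$ for $v\in W$ is a Lie bialgebra structure on $\mathfrak n$.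
   Context: $W$ is a linear complement of $\mathfrak z$; $T_i:W\to W^*$ is defined by $[v,w]=\sum_iT_i(v)(w)z_i$. A Lie bialgebra structure is a linear $\delta:\mathfrak n\to\Lambda^2\mathfrak n$ satisfying co-Jacobi ($\delta(x_1)\wedge x_2-x_1\wedge\delta(x_2)=0$ in $\Lambda^3$, Sweedler notation $\delta(x)=x_1\wedge x_2$) and the 1-cocycle condition $\delta[x,y]=[\delta x,y]+[x,\delta y]$. (In the paper, condition (b) on the commutators is phrased as: $f\mapsto-\sum_if(z_i)D^i$ is a Lie algebra map $\mathfrak z^*\to\mathrm{End}(W)$ for the bracket dual to $\delta_{\mathfrak z}$; condition (c) as: the transpose $\Lambda^2\mathfrak z^*\to W^*$ of $\varphi$ is a 2-cocycle with values in $W^*$.) *)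

theory Defs
  imports Main
begin

text \<open>A vector space with finite basis indexed by type 'i is modelled as 'i => 'a.
  Lambda^2 is modelled by alternating 2-tensors 'i => 'i => 'a, Lambda^3 by
  alternating 3-tensors, with x wedge y = x (x) y - y (x) x, so that
  sum_{p<q} w p q e_p wedge e_q = w for alternating w.\<close>

definition basis_vec :: "'i \<Rightarrow> 'i \<Rightarrow> 'a::{zero,one}" where
  "basis_vec k = (\<lambda>j. if j = k then 1 else 0)"

definition alt2 :: "('i \<Rightarrow> 'i \<Rightarrow> 'a::comm_ring) \<Rightarrow> bool" where
  "alt2 w \<longleftrightarrow> (\<forall>p q. w p q = - w q p)"

definition wedge11 :: "('i \<Rightarrow> 'a::comm_ring) \<Rightarrow> ('i \<Rightarrow> 'a) \<Rightarrow> 'i \<Rightarrow> 'i \<Rightarrow> 'a" where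
  "wedge11 x y = (\<lambda>p q. x p * y q - x q * y p)"

definition wedge21 :: "('i \<Rightarrow> 'i \<Rightarrow> 'a::comm_ring) \<Rightarrow> ('i \<Rightarrow> 'a) \<Rightarrow> 'i \<Rightarrow> 'i \<Rightarrow> 'i \<Rightarrow> 'a" where
  "wedge21 w x = (\<lambda>p q r. w p q * x r + w q r * x p + w r p * x q)"

definition wedge12 :: "('i \<Rightarrow> 'a::comm_ring) \<Rightarrow> ('i \<Rightarrow> 'i \<Rightarrow> 'a) \<Rightarrow> 'i \<Rightarrow> 'i \<Rightarrow> 'i \<Rightarrow> 'a" where
  "wedge12 x w = (\<lambda>p q r. x p * w q r + x q * w r p + x r * w p q)"

text \<open>Co-Jacobi expression delta(x_1) wedge x_2 - x_1 wedge delta(x_2) in Sweedler notation: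
  delta x = sum_{s,t} (delta x s t / 2) e_s wedge e_t.\<close>
definition cojac :: "(('i::finite \<Rightarrow> 'a::field) \<Rightarrow> 'i \<Rightarrow> 'i \<Rightarrow> 'a) \<Rightarrow> ('i \<Rightarrow> 'a) \<Rightarrow> 'i \<Rightarrow> 'i \<Rightarrow> 'i \<Rightarrow> 'a" where
  "cojac \<delta> x = (\<lambda>p q r. \<Sum>s\<in>UNIV. \<Sum>t\<in>UNIV. (\<delta> x s t / 2) *
      (wedge21 (\<delta> (basis_vec s)) (basis_vec t) p q r - wedge12 (basis_vec s) (\<delta> (basis_vec t)) p q r))"

text \<open>Extension of a linear map L (given as a function) to Lambda^2 as a derivation:
  L(a wedge b) = L a wedge b + a wedge L b.\<close>
definition ext2 :: "(('i::finite \<Rightarrow> 'a::comm_ring_1) \<Rightarrow> ('i \<Rightarrow> 'a)) \<Rightarrow> ('i \<Rightarrow> 'i \<Rightarrow> 'a) \<Rightarrow> 'i \<Rightarrow> 'i \<Rightarrow> 'a" where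
  "ext2 L w = (\<lambda>r s. (\<Sum>p\<in>UNIV. L (basis_vec p) r * w p s) + (\<Sum>q\<in>UNIV. L (basis_vec q) s * w r q))"

definition lie_bialgebra ::
  "(('i::finite \<Rightarrow> 'a::field) \<Rightarrow> ('i \<Rightarrow> 'a) \<Rightarrow> ('i \<Rightarrow> 'a)) \<Rightarrow> (('i \<Rightarrow> 'a) \<Rightarrow> 'i \<Rightarrow> 'i \<Rightarrow> 'a) \<Rightarrow> bool" where
  "lie_bialgebra br \<delta> \<longleftrightarrow>
     (\<forall>x y. \<delta> (\<lambda>k. x k + y k) = (\<lambda>p q. \<delta> x p q + \<delta> y p q)) \<and>
     (\<forall>c x. \<delta> (\<lambda>k. c * x k) = (\<lambda>p q. c * \<delta> x p q)) \<and>
     (\<forall>x. alt2 (\<delta> x)) \<and>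
     (\<forall>x. cojac \<delta> x = (\<lambda>p q r. 0)) \<and>
     (\<forall>x y. \<delta> (br x y) = (\<lambda>r s. ext2 (\<lambda>u. br u y) (\<delta> x) r s + ext2 (\<lambda>u. br x u) (\<delta> y) r s))"

text \<open>T i p q : matrix of the bilinear form T_i on W; T_i(v)(w) = Tf T i v w.\<close>
definition Tf :: "('z \<Rightarrow> 'w::finite \<Rightarrow> 'w \<Rightarrow> 'a::comm_ring) \<Rightarrow> 'z \<Rightarrow> ('w \<Rightarrow> 'a) \<Rightarrow> ('w \<Rightarrow> 'a) \<Rightarrow> 'a" where
  "Tf T i v w = (\<Sum>p\<in>UNIV. \<Sum>q\<in>UNIV. v p * w q * T i p q)"

text \<open>D j p q : matrix of D^j : W -> W.\<close>
definition Dap :: "('z \<Rightarrow> 'w::finite \<Rightarrow> 'w \<Rightarrow> 'a::comm_ring) \<Rightarrow> 'z \<Rightarrow> ('w \<Rightarrow> 'a) \<Rightarrow> 'w \<Rightarrow> 'a" where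
  "Dap D j v = (\<lambda>p. \<Sum>q\<in>UNIV. D j p q * v q)"

definition Wpart :: "('w + 'z \<Rightarrow> 'a) \<Rightarrow> 'w \<Rightarrow> 'a" where
  "Wpart x = (\<lambda>p. x (Inl p))"

definition Zpart :: "('w + 'z \<Rightarrow> 'a) \<Rightarrow> 'z \<Rightarrow> 'a" where
  "Zpart x = (\<lambda>i. x (Inr i))"

definition embW :: "('w \<Rightarrow> 'a::zero) \<Rightarrow> 'w + 'z \<Rightarrow> 'a" where
  "embW v = (\<lambda>k. case k of Inl p \<Rightarrow> v p | Inr _ \<Rightarrow> 0)"

definition embZ2 :: "('z \<Rightarrow> 'z \<Rightarrow> 'a::zero) \<Rightarrow> 'w + 'z \<Rightarrow> 'w + 'z \<Rightarrow> 'a" where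
  "embZ2 w = (\<lambda>r s. case (r, s) of (Inr a, Inr b) \<Rightarrow> w a b | _ \<Rightarrow> 0)"

definition linext2 :: "('i \<Rightarrow> 'j \<Rightarrow> 'j \<Rightarrow> 'a::comm_ring) \<Rightarrow> ('i::finite \<Rightarrow> 'a) \<Rightarrow> 'j \<Rightarrow> 'j \<Rightarrow> 'a" where
  "linext2 f x = (\<lambda>a b. \<Sum>k\<in>UNIV. x k * f k a b)"

definition nbr :: "('z::finite \<Rightarrow> 'w::finite \<Rightarrow> 'w \<Rightarrow> 'a::comm_ring) \<Rightarrow> ('w + 'z \<Rightarrow> 'a) \<Rightarrow> ('w + 'z \<Rightarrow> 'a) \<Rightarrow> 'w + 'z \<Rightarrow> 'a" where
  "nbr T x y = (\<lambda>k. case k of Inl _ \<Rightarrow> 0 | Inr i \<Rightarrow> Tf T i (Wpart x) (Wpart y))"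

definition delta_n ::
  "('z::finite \<Rightarrow> 'z \<Rightarrow> 'z \<Rightarrow> 'a::comm_ring_1) \<Rightarrow> ('z \<Rightarrow> 'w::finite \<Rightarrow> 'w \<Rightarrow> 'a) \<Rightarrow> ('w \<Rightarrow> 'z \<Rightarrow> 'z \<Rightarrow> 'a)
    \<Rightarrow> ('w + 'z \<Rightarrow> 'a) \<Rightarrow> 'w + 'z \<Rightarrow> 'w + 'z \<Rightarrow> 'a" where
  "delta_n dz D phi x = (\<lambda>r s.
      embZ2 (linext2 dz (Zpart x)) r s
    + (\<Sum>i\<in>UNIV. wedge11 (embW (Dap D i (Wpart x))) (basis_vec (Inr i)) r s)
    + embZ2 (linext2 phi (Wpart x)) r s)"

end

theory Submission
  imports Defs
begin

text \<open>Since \<open>\<delta>\<close> has no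
  \<open>W \<wedge> W\<close> component, the co-Jacobi tensor of \<open>\<delta>(x)\<close> can only be nonzero on \<open>W \<wedge> z \<wedge> z\<close>, where it is
  the commutator relation \<open>[D\<^sup>a, D\<^sup>b] = \<Sum>\<^sub>i c\<^sub>i\<^sup>a\<^sup>b D\<^sup>i\<close>, and on \<open>z \<wedge> z \<wedge> z\<close>, where it splits into
  co-Jacobi for \<open>\<delta>\<^sub>z\<close> applied to the \<open>z\<close>-part of \<open>x\<close> plus condition (c) applied to its \<open>W\<close>-part.
  Since brackets land in the centre, the cocycle condition only has a \<open>z \<wedge> z\<close> component, and this
  is the compatibility of the \<open>D\<^sup>j\<close> with the forms \<open>T\<^sub>i\<close> assumed in (b).\<close>

lemma sum_UNIV_Plus:
  "(\<Sum>s\<in>UNIV. g s) = (\<Sum>p\<in>UNIV. g (Inl p)) + (\<Sum>i\<in>UNIV. g (Inr i))"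
  for g :: "'w::finite + 'z::finite \<Rightarrow> 'a::comm_monoid_add"
  by (subst UNIV_Plus_UNIV[symmetric], subst sum.Plus) (auto simp: o_def)

lemma basis_vec_apply: "basis_vec k j = (if j = k then 1 else 0)"
  by (simp add: basis_vec_def)

lemma mult_if_zero:
  fixes x y :: "'a::mult_zero"
  shows "x * (if P then y else 0) = (if P then x * y else 0)"
    and "(if P then x else 0) * y = (if P then x * y else 0)"
  by auto

lemmas basis_vec_simps = basis_vec_apply mult_if_zero

lemma alt2_linext2:
  assumes "\<And>k. alt2 (f k)"
  shows "alt2 (linext2 f (x :: 'i::finite \<Rightarrow> 'a::comm_ring))"
  unfolding alt2_def linext2_def
proof (intro allI)
  fix p q
  have "(\<Sum>k\<in>UNIV. x k * f k p q) = (\<Sum>k\<in>UNIV. - (x k * f k q p))"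
    using assms by (intro sum.cong refl) (metis alt2_def mult_minus_right)
  then show "(\<Sum>k\<in>UNIV. x k * f k p q) = - (\<Sum>k\<in>UNIV. x k * f k q p)"
    by (simp add: sum_negf)
qed

text \<open>The diagonal terms vanish because \<open>h a a = 0\<close>; this is where characteristic \<open>\<noteq> 2\<close> enters.\<close>
lemma sum_less_antisym:
  fixes h g :: "'z::{finite,linorder} \<Rightarrow> 'z \<Rightarrow> 'a::field_char_0"
  assumes anti: "\<And>a b. h a b = - h b a"
  shows "(\<Sum>a\<in>UNIV. \<Sum>b\<in>UNIV. if a < b then h a b * (g a b - g b a) else 0)
       = (\<Sum>a\<in>UNIV. \<Sum>b\<in>UNIV. h a b * g a b)"
proof -
  have diag: "h a a = 0" for a
    using anti[of a a] by simp
  have split: "h a b * g a b = (if a < b then h a b * g a b else 0) + (if b < a then h a b * g a b else 0)"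
    for a b
    using diag[of a] by (cases a b rule: linorder_cases) auto
  have "(\<Sum>a\<in>UNIV. \<Sum>b\<in>UNIV. if b < a then h a b * g a b else 0)
      = (\<Sum>b\<in>UNIV. \<Sum>a\<in>UNIV. if b < a then h a b * g a b else 0)"
    by (rule sum.swap)
  also have "\<dots> = (\<Sum>a\<in>UNIV. \<Sum>b\<in>UNIV. if a < b then - (h a b * g b a) else 0)"
    by (intro sum.cong refl) (metis anti mult_minus_left)
  finally have lower: "(\<Sum>a\<in>UNIV. \<Sum>b\<in>UNIV. if b < a then h a b * g a b else 0)
      = (\<Sum>a\<in>UNIV. \<Sum>b\<in>UNIV. if a < b then - (h a b * g b a) else 0)" .
  have "(\<Sum>a\<in>UNIV. \<Sum>b\<in>UNIV. h a b * g a b)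
      = (\<Sum>a\<in>UNIV. \<Sum>b\<in>UNIV. if a < b then h a b * g a b else 0)
      + (\<Sum>a\<in>UNIV. \<Sum>b\<in>UNIV. if b < a then h a b * g a b else 0)"
    by (subst split) (simp only: sum.distrib)
  also have "\<dots> = (\<Sum>a\<in>UNIV. \<Sum>b\<in>UNIV. if a < b then h a b * (g a b - g b a) else 0)"
    unfolding lower sum.distrib[symmetric] by (intro sum.cong refl) (simp add: right_diff_distrib)
  finally show ?thesis ..
qed

lemma cojac_eq_cyclic_sum:
  fixes \<delta> :: "('i::finite \<Rightarrow> 'a::field_char_0) \<Rightarrow> 'i \<Rightarrow> 'i \<Rightarrow> 'a"
  assumes "alt2 (\<delta> x)"
  shows "cojac \<delta> x p q r = (\<Sum>s\<in>UNIV. \<delta> x s r * \<delta> (basis_vec s) p q + \<delta> x s p * \<delta> (basis_vec s) q r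
      + \<delta> x s q * \<delta> (basis_vec s) r p)"
proof -
  have anti: "\<delta> x s t = - \<delta> x t s" for s t
    using assms unfolding alt2_def by blast
  have first: "(\<Sum>s\<in>UNIV. \<Sum>t\<in>UNIV. (\<delta> x s t / 2) * wedge21 (\<delta> (basis_vec s)) (basis_vec t) p q r)
     = (\<Sum>s\<in>UNIV. (\<delta> x s r * \<delta> (basis_vec s) p q + \<delta> x s p * \<delta> (basis_vec s) q r
         + \<delta> x s q * \<delta> (basis_vec s) r p) / 2)"
    by (intro sum.cong refl)
      (simp add: wedge21_def distrib_left sum.distrib basis_vec_simps add_divide_distrib)
  have second: "(\<Sum>s\<in>UNIV. \<Sum>t\<in>UNIV. (\<delta> x s t / 2) * wedge12 (basis_vec s) (\<delta> (basis_vec t)) p q r)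
     = (\<Sum>s\<in>UNIV. - (\<delta> x s r * \<delta> (basis_vec s) p q + \<delta> x s p * \<delta> (basis_vec s) q r
         + \<delta> x s q * \<delta> (basis_vec s) r p) / 2)"
    by (subst sum.swap, intro sum.cong refl)
      (simp add: wedge12_def distrib_left sum.distrib basis_vec_simps add_divide_distrib
        anti[of p] anti[of q] anti[of r])
  have "cojac \<delta> x p q r
      = (\<Sum>s\<in>UNIV. \<Sum>t\<in>UNIV. (\<delta> x s t / 2) * wedge21 (\<delta> (basis_vec s)) (basis_vec t) p q r)
      - (\<Sum>s\<in>UNIV. \<Sum>t\<in>UNIV. (\<delta> x s t / 2) * wedge12 (basis_vec s) (\<delta> (basis_vec t)) p q r)"
    by (simp add: cojac_def right_diff_distrib sum_subtractf)
  also have "\<dots> = (\<Sum>s\<in>UNIV. \<delta> x s r * \<delta> (basis_vec s) p q + \<delta> x s p * \<delta> (basis_vec s) q r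
      + \<delta> x s q * \<delta> (basis_vec s) r p)"
    unfolding first second sum_subtractf[symmetric] by (intro sum.cong refl) (simp add: field_simps)
  finally show ?thesis .
qed

lemma delta_n_Inl_Inl [simp]: "delta_n dz D phi x (Inl p) (Inl q) = 0"
  by (simp add: delta_n_def embZ2_def wedge11_def embW_def basis_vec_apply)

lemma delta_n_Inl_Inr [simp]: "delta_n dz D phi x (Inl p) (Inr j) = Dap D j (Wpart x) p"
  by (simp add: delta_n_def embZ2_def wedge11_def embW_def basis_vec_simps cong: if_cong)

lemma delta_n_Inr_Inl [simp]: "delta_n dz D phi x (Inr j) (Inl p) = - Dap D j (Wpart x) p"
  by (simp add: delta_n_def embZ2_def wedge11_def embW_def basis_vec_simps sum_negf cong: if_cong)

lemma delta_n_Inr_Inr [simp]: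
  "delta_n dz D phi x (Inr a) (Inr b) = linext2 dz (Zpart x) a b + linext2 phi (Wpart x) a b"
  by (simp add: delta_n_def embZ2_def wedge11_def embW_def basis_vec_simps cong: if_cong)

lemma Wpart_basis_vec_Inl [simp]: "Wpart (basis_vec (Inl p)) = basis_vec p"
  and Wpart_basis_vec_Inr [simp]: "Wpart (basis_vec (Inr i)) = (\<lambda>_. 0)"
  and Zpart_basis_vec_Inl [simp]: "Zpart (basis_vec (Inl p)) = (\<lambda>_. 0)"
  and Zpart_basis_vec_Inr [simp]: "Zpart (basis_vec (Inr i)) = basis_vec i"
  by (auto simp: Wpart_def Zpart_def basis_vec_def)

lemma Dap_basis_vec [simp]: "Dap D i (basis_vec q) p = (D i p q :: 'a::comm_ring_1)"
  and Dap_zero [simp]: "Dap D i (\<lambda>_. 0) p = 0"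
  by (simp_all add: Dap_def basis_vec_simps)

lemma linext2_basis_vec [simp]: "linext2 f (basis_vec k) a b = (f k a b :: 'a::comm_ring_1)"
  and linext2_zero [simp]: "linext2 f (\<lambda>_. 0) a b = 0"
  by (simp_all add: linext2_def basis_vec_simps)

lemma delta_n_add:
  fixes x y :: "'w::finite + 'z::finite \<Rightarrow> 'a::comm_ring_1"
  shows "delta_n dz D phi (\<lambda>k. x k + y k) = (\<lambda>p q. delta_n dz D phi x p q + delta_n dz D phi y p q)"
proof (intro ext)
  fix p q :: "'w + 'z"
  show "delta_n dz D phi (\<lambda>k. x k + y k) p q = delta_n dz D phi x p q + delta_n dz D phi y p q"
    by (cases p; cases q)
      (simp_all add: Wpart_def Zpart_def Dap_def linext2_def sum.distrib algebra_simps)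
qed

lemma delta_n_scale:
  fixes x :: "'w::finite + 'z::finite \<Rightarrow> 'a::comm_ring_1"
  shows "delta_n dz D phi (\<lambda>k. c * x k) = (\<lambda>p q. c * delta_n dz D phi x p q)"
proof (intro ext)
  fix p q :: "'w + 'z"
  show "delta_n dz D phi (\<lambda>k. c * x k) p q = c * delta_n dz D phi x p q"
    by (cases p; cases q)
      (simp_all add: Wpart_def Zpart_def Dap_def linext2_def sum_distrib_left algebra_simps)
qed

lemma alt2_delta_n:
  fixes x :: "'w::finite + 'z::finite \<Rightarrow> 'a::comm_ring_1"
  assumes "\<And>i. alt2 (dz i)" and "\<And>p. alt2 (phi p)"
  shows "alt2 (delta_n dz D phi x)"
  unfolding alt2_def
proof (intro allI)
  fix p q :: "'w + 'z"
  have dz_anti: "linext2 dz z a b = - linext2 dz z b a"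
    and phi_anti: "linext2 phi v a b = - linext2 phi v b a" for z v a b
    using alt2_linext2[of dz, OF assms(1)] alt2_linext2[of phi, OF assms(2)]
    unfolding alt2_def by blast+
  show "delta_n dz D phi x p q = - delta_n dz D phi x q p"
  proof (cases p; cases q)
    fix a b
    assume "p = Inr a" "q = Inr b"
    then show ?thesis
      using dz_anti[of "Zpart x" a b] phi_anti[of "Wpart x" a b] by simp
  qed simp_all
qed

lemma Dap_commutator:
  fixes dz :: "'z::{finite,linorder} \<Rightarrow> 'z \<Rightarrow> 'z \<Rightarrow> 'a::field_char_0"
    and D :: "'z \<Rightarrow> 'w::finite \<Rightarrow> 'w \<Rightarrow> 'a"
  assumes dz_alt: "\<And>i. alt2 (dz i)"
    and D_comm: "\<And>a b v. a < b \<Longrightarrow>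
        (\<lambda>p. Dap D a (Dap D b v) p - Dap D b (Dap D a v) p) = (\<lambda>p. \<Sum>i\<in>UNIV. dz i a b * Dap D i v p)"
  shows "Dap D a (Dap D b v) p - Dap D b (Dap D a v) p = (\<Sum>i\<in>UNIV. dz i a b * Dap D i v p)"
proof (cases a b rule: linorder_cases)
  case less
  show ?thesis
    using fun_cong[OF D_comm[OF less]] by simp
next
  case equal
  have "dz i a a = 0" for i
  proof -
    have "dz i a a = - dz i a a"
      using dz_alt[of i] unfolding alt2_def by blast
    then show ?thesis
      by simp
  qed
  then show ?thesis
    using equal by simp
next
  case greater
  have dz_anti: "dz i a b = - dz i b a" for i
    using dz_alt[of i] unfolding alt2_def by blast
  have "Dap D b (Dap D a v) p - Dap D a (Dap D b v) p = (\<Sum>i\<in>UNIV. dz i b a * Dap D i v p)"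
    using fun_cong[OF D_comm[OF greater]] by simp
  then have "Dap D b (Dap D a v) p - Dap D a (Dap D b v) p = - (\<Sum>i\<in>UNIV. dz i a b * Dap D i v p)"
    by (simp add: dz_anti sum_negf)
  then show ?thesis
    by (metis minus_diff_eq minus_minus)
qed

lemma cyclic_sum_linext2_eq_0:
  fixes dz :: "'z::finite \<Rightarrow> 'z \<Rightarrow> 'z \<Rightarrow> 'a::field_char_0"
  assumes "\<And>i. alt2 (dz i)" and "cojac (linext2 dz) z = (\<lambda>a b c. 0)"
  shows "(\<Sum>k\<in>UNIV. linext2 dz z k c * dz k a b + linext2 dz z k a * dz k b c
      + linext2 dz z k b * dz k c a) = 0"
  using fun_cong[OF fun_cong[OF fun_cong[OF assms(2)]], of a b c]
  by (simp add: cojac_eq_cyclic_sum[OF alt2_linext2[OF assms(1)]])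

lemma wedge12_eq_wedge21: "wedge12 x w = wedge21 w x"
  by (simp add: wedge12_def wedge21_def fun_eq_iff algebra_simps)

lemma cyclic_sum_phi_eq_0:
  fixes dz :: "'z::{finite,linorder} \<Rightarrow> 'z \<Rightarrow> 'z \<Rightarrow> 'a::field_char_0"
    and D :: "'z \<Rightarrow> 'w::finite \<Rightarrow> 'w \<Rightarrow> 'a" and phi :: "'w \<Rightarrow> 'z \<Rightarrow> 'z \<Rightarrow> 'a"
  assumes phi_alt: "\<And>p. alt2 (phi p)"
    and phi_cond: "(\<lambda>a b c.
          (\<Sum>i\<in>UNIV. wedge21 (linext2 phi (Dap D i v)) (basis_vec i) a b c)
        + (\<Sum>a'\<in>UNIV. \<Sum>b'\<in>UNIV. if a' < b' then linext2 phi v a' b' *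
             (wedge21 (dz a') (basis_vec b') a b c - wedge12 (basis_vec a') (dz b') a b c) else 0))
        = (\<lambda>a b c. 0)"
  shows "linext2 phi (Dap D c v) a b + linext2 phi (Dap D a v) b c + linext2 phi (Dap D b v) c a
     + (\<Sum>k\<in>UNIV. linext2 phi v k c * dz k a b + linext2 phi v k a * dz k b c
         + linext2 phi v k b * dz k c a) = 0"
proof -
  have phi_anti: "linext2 phi v x y = - linext2 phi v y x" for x y
    using alt2_linext2[of phi v] phi_alt unfolding alt2_def by blast
  have "(\<Sum>i\<in>UNIV. wedge21 (linext2 phi (Dap D i v)) (basis_vec i) a b c)
     = linext2 phi (Dap D c v) a b + linext2 phi (Dap D a v) b c + linext2 phi (Dap D b v) c a"
    by (simp add: wedge21_def sum.distrib basis_vec_simps cong: if_cong)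
  moreover have "(\<Sum>a'\<in>UNIV. \<Sum>b'\<in>UNIV. if a' < b' then linext2 phi v a' b' *
        (wedge21 (dz a') (basis_vec b') a b c - wedge12 (basis_vec a') (dz b') a b c) else 0)
     = (\<Sum>a'\<in>UNIV. \<Sum>b'\<in>UNIV. linext2 phi v a' b' * wedge21 (dz a') (basis_vec b') a b c)"
    unfolding wedge12_eq_wedge21 by (rule sum_less_antisym[OF phi_anti])
  moreover have "\<dots> = (\<Sum>k\<in>UNIV. linext2 phi v k c * dz k a b + linext2 phi v k a * dz k b c
         + linext2 phi v k b * dz k c a)"
    by (simp add: wedge21_def sum.distrib distrib_left basis_vec_simps cong: if_cong)
  ultimately show ?thesis
    using fun_cong[OF fun_cong[OF fun_cong[OF phi_cond]], of a b c] by simp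
qed

lemma Dap_Dap: "Dap D a (Dap D b v) p = (\<Sum>w\<in>UNIV. Dap D b v w * D a p w)"
  by (simp add: Dap_def[of D a] mult.commute)

lemma cojac_delta_n:
  fixes dz :: "'z::{finite,linorder} \<Rightarrow> 'z \<Rightarrow> 'z \<Rightarrow> 'a::field_char_0"
    and D :: "'z \<Rightarrow> 'w::finite \<Rightarrow> 'w \<Rightarrow> 'a" and phi :: "'w \<Rightarrow> 'z \<Rightarrow> 'z \<Rightarrow> 'a"
  assumes dz_alt: "\<And>i. alt2 (dz i)"
    and dz_cojac: "\<And>x. cojac (linext2 dz) x = (\<lambda>a b c. 0)"
    and D_comm: "\<And>a b v. a < b \<Longrightarrow>
        (\<lambda>p. Dap D a (Dap D b v) p - Dap D b (Dap D a v) p) = (\<lambda>p. \<Sum>i\<in>UNIV. dz i a b * Dap D i v p)"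
    and phi_alt: "\<And>p. alt2 (phi p)"
    and phi_cond: "\<And>v. (\<lambda>a b c.
          (\<Sum>i\<in>UNIV. wedge21 (linext2 phi (Dap D i v)) (basis_vec i) a b c)
        + (\<Sum>a'\<in>UNIV. \<Sum>b'\<in>UNIV. if a' < b' then linext2 phi v a' b' *
             (wedge21 (dz a') (basis_vec b') a b c - wedge12 (basis_vec a') (dz b') a b c) else 0))
        = (\<lambda>a b c. 0)"
  shows "cojac (delta_n dz D phi) x = (\<lambda>p q r. 0)"
proof (intro ext)
  fix p q r
  let ?v = "Wpart x" and ?z = "Zpart x"
  have WZZ: "(\<Sum>w\<in>UNIV. Dap D b ?v w * D a u w - Dap D a ?v w * D b u w)
      + (\<Sum>i\<in>UNIV. - (Dap D i ?v u * dz i a b)) = 0" for a b u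
    using Dap_commutator[OF dz_alt D_comm, of a b ?v u]
    by (simp add: sum_subtractf sum_negf Dap_Dap mult.commute)
  have ZZZ: "(\<Sum>w\<in>UNIV. Dap D c ?v w * phi w a b + Dap D a ?v w * phi w b c + Dap D b ?v w * phi w c a)
      + (\<Sum>i\<in>UNIV. (linext2 dz ?z i c + linext2 phi ?v i c) * dz i a b
          + (linext2 dz ?z i a + linext2 phi ?v i a) * dz i b c
          + (linext2 dz ?z i b + linext2 phi ?v i b) * dz i c a) = 0" for a b c
  proof -
    have "(\<Sum>w\<in>UNIV. Dap D c ?v w * phi w a b + Dap D a ?v w * phi w b c + Dap D b ?v w * phi w c a)
      + (\<Sum>i\<in>UNIV. (linext2 dz ?z i c + linext2 phi ?v i c) * dz i a b
          + (linext2 dz ?z i a + linext2 phi ?v i a) * dz i b c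
          + (linext2 dz ?z i b + linext2 phi ?v i b) * dz i c a)
      = (\<Sum>i\<in>UNIV. linext2 dz ?z i c * dz i a b + linext2 dz ?z i a * dz i b c
          + linext2 dz ?z i b * dz i c a)
      + (linext2 phi (Dap D c ?v) a b + linext2 phi (Dap D a ?v) b c + linext2 phi (Dap D b ?v) c a
          + (\<Sum>i\<in>UNIV. linext2 phi ?v i c * dz i a b + linext2 phi ?v i a * dz i b c
              + linext2 phi ?v i b * dz i c a))"
      unfolding linext2_def[of phi "Dap D _ _"] by (simp only: distrib_right sum.distrib add_ac)
    then show ?thesis
      using cyclic_sum_linext2_eq_0[OF dz_alt dz_cojac, of ?z c a b]
        cyclic_sum_phi_eq_0[OF phi_alt phi_cond, of c ?v a b]
      by simp
  qed
  show "cojac (delta_n dz D phi) x p q r = 0"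
    unfolding cojac_eq_cyclic_sum[OF alt2_delta_n[OF dz_alt phi_alt]] sum_UNIV_Plus
    by (cases p; cases q; cases r) (simp_all add: WZZ ZZZ)
qed

lemma Tf_eq_sum_left: "Tf T i v y = (\<Sum>p\<in>UNIV. v p * (\<Sum>q\<in>UNIV. y q * T i p q))"
  by (simp add: Tf_def sum_distrib_left mult.assoc)

lemma Tf_eq_sum_right: "Tf T i x v = (\<Sum>q\<in>UNIV. v q * (\<Sum>p\<in>UNIV. x p * T i p q))"
  unfolding Tf_def by (subst sum.swap) (simp add: sum_distrib_left ac_simps)

lemma Tf_basis_vec_left: "(\<Sum>w\<in>UNIV. Tf T i (basis_vec w) y * c w) = (Tf T i c y :: 'a::comm_ring_1)"
  unfolding Tf_eq_sum_left[of T i _ y] by (simp add: basis_vec_simps mult.commute cong: if_cong)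

lemma Tf_basis_vec_right: "(\<Sum>w\<in>UNIV. Tf T i x (basis_vec w) * c w) = (Tf T i x c :: 'a::comm_ring_1)"
  unfolding Tf_eq_sum_right[of T i x] by (simp add: basis_vec_simps mult.commute cong: if_cong)

lemma Tf_zero [simp]:
  "Tf T i (\<lambda>_. 0) y = (0 :: 'a::comm_ring)" "Tf T i x (\<lambda>_. 0) = (0 :: 'a::comm_ring)"
  by (simp_all add: Tf_def)

lemma nbr_Inl [simp]: "nbr T x y (Inl p) = 0"
  and nbr_Inr [simp]: "nbr T x y (Inr i) = Tf T i (Wpart x) (Wpart y)"
  and Wpart_nbr [simp]: "Wpart (nbr T x y) = (\<lambda>_. 0)"
  and Zpart_nbr [simp]: "Zpart (nbr T x y) = (\<lambda>i. Tf T i (Wpart x) (Wpart y))"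
  by (simp_all add: nbr_def Wpart_def Zpart_def)

lemma delta_n_cocycle:
  fixes T :: "'z::finite \<Rightarrow> 'w::finite \<Rightarrow> 'w \<Rightarrow> 'a::comm_ring_1"
  assumes D_T: "\<And>x y. (\<lambda>a b. \<Sum>i\<in>UNIV. Tf T i x y * dz i a b) =
        (\<lambda>a b. \<Sum>i\<in>UNIV. \<Sum>j\<in>UNIV.
           (Tf T i (Dap D j x) y + Tf T i x (Dap D j y)) * wedge11 (basis_vec i) (basis_vec j) a b)"
  shows "delta_n dz D phi (nbr T x y)
      = (\<lambda>r s. ext2 (\<lambda>u. nbr T u y) (delta_n dz D phi x) r s + ext2 (nbr T x) (delta_n dz D phi y) r s)"
proof (intro ext)
  fix r s
  show "delta_n dz D phi (nbr T x y) r s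
      = ext2 (\<lambda>u. nbr T u y) (delta_n dz D phi x) r s + ext2 (nbr T x) (delta_n dz D phi y) r s"
  proof (cases r; cases s)
    fix a b
    assume rs: "r = Inr a" "s = Inr b"
    have "(\<Sum>i\<in>UNIV. Tf T i (Wpart x) (Wpart y) * dz i a b) =
       Tf T a (Dap D b (Wpart x)) (Wpart y) + Tf T a (Wpart x) (Dap D b (Wpart y))
       - (Tf T b (Dap D a (Wpart x)) (Wpart y) + Tf T b (Wpart x) (Dap D a (Wpart y)))"
      using fun_cong[OF fun_cong[OF D_T[of "Wpart x" "Wpart y"]], of a b]
      by (simp add: wedge11_def basis_vec_simps right_diff_distrib sum_subtractf cong: if_cong)
    then show ?thesis
      using rs by (simp add: ext2_def sum_UNIV_Plus sum_negf Tf_basis_vec_left Tf_basis_vec_right linext2_def)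
  qed (simp_all add: ext2_def sum_UNIV_Plus)
qed

text \<open>The hypotheses \<open>T_alt\<close>, \<open>center\<close> and \<open>nonabelian\<close> only say that \<open>n\<close> is 2-step nilpotent
  with centre exactly \<open>z\<close>; the bialgebra axioms hold without them.\<close>
theorem mainTheorem6:
  fixes T :: "'z::{finite,linorder} \<Rightarrow> 'w::finite \<Rightarrow> 'w \<Rightarrow> 'a::field_char_0"
    and dz :: "'z \<Rightarrow> 'z \<Rightarrow> 'z \<Rightarrow> 'a"
    and D :: "'z \<Rightarrow> 'w \<Rightarrow> 'w \<Rightarrow> 'a"
    and phi :: "'w \<Rightarrow> 'z \<Rightarrow> 'z \<Rightarrow> 'a"
  assumes T_alt: "\<And>i p q. T i p q = - T i q p"
    and center: "\<And>v. (\<forall>i w. Tf T i v w = 0) \<Longrightarrow> v = (\<lambda>p. 0)"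
    and nonabelian: "\<exists>i p q. T i p q \<noteq> 0"
    and dz_alt: "\<And>i. alt2 (dz i)"
    and dz_cojac: "\<And>x. cojac (linext2 dz) x = (\<lambda>a b c. 0)"
    and D_comm: "\<And>a b v. a < b \<Longrightarrow>
        (\<lambda>p. Dap D a (Dap D b v) p - Dap D b (Dap D a v) p) = (\<lambda>p. \<Sum>i\<in>UNIV. dz i a b * Dap D i v p)"
    and D_T: "\<And>x y. (\<lambda>a b. \<Sum>i\<in>UNIV. Tf T i x y * dz i a b) =
        (\<lambda>a b. \<Sum>i\<in>UNIV. \<Sum>j\<in>UNIV.
           (Tf T i (Dap D j x) y + Tf T i x (Dap D j y)) * wedge11 (basis_vec i) (basis_vec j) a b)"
    and phi_alt: "\<And>p. alt2 (phi p)"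
    and phi_cond: "\<And>v. (\<lambda>a b c.
          (\<Sum>i\<in>UNIV. wedge21 (linext2 phi (Dap D i v)) (basis_vec i) a b c)
        + (\<Sum>a'\<in>UNIV. \<Sum>b'\<in>UNIV. if a' < b' then linext2 phi v a' b' *
             (wedge21 (dz a') (basis_vec b') a b c - wedge12 (basis_vec a') (dz b') a b c) else 0))
        = (\<lambda>a b c. 0)"
  shows "lie_bialgebra (nbr T) (delta_n dz D phi)"
  unfolding lie_bialgebra_def
proof (intro conjI allI)
  show "alt2 (delta_n dz D phi x)" for x
    using dz_alt phi_alt by (rule alt2_delta_n)
  show "cojac (delta_n dz D phi) x = (\<lambda>p q r. 0)" for x
    using dz_alt dz_cojac D_comm phi_alt phi_cond by (rule cojac_delta_n)
  show "delta_n dz D phi (nbr T x y)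
      = (\<lambda>r s. ext2 (\<lambda>u. nbr T u y) (delta_n dz D phi x) r s + ext2 (nbr T x) (delta_n dz D phi y) r s)"
    for x y
    using D_T by (rule delta_n_cocycle)
qed (simp_all only: delta_n_add delta_n_scale)

end
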